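(* For every integer $n \geq 0$, $$\int_0^{\pi/2} x\cos^{2n}x\,dx = \frac{\binom{2n}{n}}{2^{2n+2}}\left(\frac{\pi^{2}}{2} - \sum_{k=1}^{n}\frac{2^{2k}}{k^{2}\binom{2k}{k}}\right),$$ and $$\int_0^{\pi/2} x\cos^{2n+1}x\,dx = \frac{2^{2n}}{(2n+1)\binom{2n}{n}}\left(\frac{\pi}{2} - \sum_{k=0}^{n}\frac{\binom{2k}{k}}{2^{2k}(2k+1)}\right).$$
   Context: An empty sum is $0$. *)

theory Defs
  imports "HOL-Analysis.Analysis"
begin

end

theory Submission
  imports Defs
begin

(* Write J m for the moment integral of x cos^m x over [0, pi/2].
   Integrating the derivative of  x cos^(m+1) x sin x + cos^(m+2) x / (m+2)  gives the
   two-step recurrence  (m+2) J(m+2) = (m+1) J m - 1/(m+2),  with J 0 = pi^2/8 and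
   J 1 = pi/2 - 1.  Rescaling by the central binomial coefficients,
     E n = 4^(n+1) J(2n) / binom(2n,n)   and   O n = (2n+1) binom(2n,n) J(2n+1) / 4^n,
   turns the recurrence into pure telescoping: each step of E (resp. O) subtracts exactly
   the n-th summand of the even (resp. odd) sum in the theorem.  The only extra fact
   needed is  (n+1) binom(2n+2,n+1) = 2(2n+1) binom(2n,n). *)

definition x_cos_moment :: "nat \<Rightarrow> real" where
  "x_cos_moment m = integral {0..pi/2} (\<lambda>x. x * cos x ^ m)"

(* An antiderivative of (m+2) x cos^(m+2) x - (m+1) x cos^m x; this is integration by
   parts twice, packaged so that the fundamental theorem applies directly. *)
lemma x_cos_power_antiderivative:
  fixes x :: real
  shows "((\<lambda>x. x * cos x ^ (k+1) * sin x + cos x ^ (k+2) / real (k+2)) has_real_derivative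
           real (k+2) * (x * cos x ^ (k+2)) - real (k+1) * (x * cos x ^ k)) (at x)"
proof -
  have "((\<lambda>x. x * cos x ^ (k+1) * sin x + cos x ^ (k+2) / real (k+2)) has_real_derivative
          x * cos x ^ (k+2) - x * real (k+1) * cos x ^ k * (sin x)\<^sup>2) (at x)"
    by (rule derivative_eq_intros refl | simp)+ (simp add: field_simps power2_eq_square)
  moreover have "x * cos x ^ (k+2) - x * real (k+1) * cos x ^ k * (sin x)\<^sup>2
      = real (k+2) * (x * cos x ^ (k+2)) - real (k+1) * (x * cos x ^ k)"
    unfolding sin_squared_eq by (simp add: algebra_simps power2_eq_square)
  ultimately show ?thesis by simp
qed

lemma x_cos_moment_recurrence:
  "real (k+2) * x_cos_moment (k+2) = real (k+1) * x_cos_moment k - 1 / real (k+2)"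
proof -
  define G where "G x = x * cos x ^ (k+1) * sin x + cos x ^ (k+2) / real (k+2)" for x :: real
  define g where "g x = real (k+2) * (x * cos x ^ (k+2)) - real (k+1) * (x * cos x ^ k)" for x :: real
  have G_deriv: "(G has_real_derivative g x) (at x)" for x
    unfolding G_def g_def by (rule x_cos_power_antiderivative)
  have "(g has_integral (G (pi/2) - G 0)) {0..pi/2}"
  proof (rule fundamental_theorem_of_calculus)
    fix x :: real
    show "(G has_vector_derivative g x) (at x within {0..pi/2})"
      using has_field_derivative_at_within[OF G_deriv]
      unfolding has_real_derivative_iff_has_vector_derivative .
  qed simp
  moreover have "G (pi/2) - G 0 = - 1 / real (k+2)"
    by (simp add: G_def)
  moreover have "integral {0..pi/2} g = real (k+2) * x_cos_moment (k+2) - real (k+1) * x_cos_moment k"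
    unfolding x_cos_moment_def g_def
    by (subst integral_diff) (auto intro!: integrable_continuous_interval continuous_intros)
  ultimately have "real (k+2) * x_cos_moment (k+2) - real (k+1) * x_cos_moment k = - 1 / real (k+2)"
    by (simp add: integral_unique)
  then show ?thesis
    by (simp add: algebra_simps)
qed

lemma x_cos_moment_0: "x_cos_moment 0 = pi\<^sup>2 / 8"
proof -
  have "((\<lambda>x::real. x) has_integral ((pi/2)\<^sup>2/2 - 0\<^sup>2/2)) {0..pi/2}"
    by (rule fundamental_theorem_of_calculus)
       (auto intro!: derivative_eq_intros simp: has_real_derivative_iff_has_vector_derivative[symmetric])
  then show ?thesis
    unfolding x_cos_moment_def by (simp add: integral_unique power2_eq_square)
qed

lemma x_cos_moment_1: "x_cos_moment 1 = pi / 2 - 1"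
proof -
  have "((\<lambda>x::real. x * cos x) has_integral
          ((pi/2 * sin (pi/2) + cos (pi/2)) - (0 * sin 0 + cos 0))) {0..pi/2}"
    by (rule fundamental_theorem_of_calculus)
       (auto intro!: derivative_eq_intros simp: has_real_derivative_iff_has_vector_derivative[symmetric])
  then show ?thesis
    unfolding x_cos_moment_def by (simp add: integral_unique)
qed

lemma central_binomial_Suc:
  "Suc n * (2 * Suc n choose Suc n) = 2 * (2*n + 1) * ((2*n) choose n)"
proof -
  have "Suc n * (2 * Suc n choose Suc n) = Suc (Suc (2*n)) * (Suc (2*n) choose n)"
    using Suc_times_binomial[of n "Suc (2*n)"] by (simp del: binomial_Suc_Suc)
  also have "Suc (2*n) choose n = Suc (2*n) choose Suc n"
    using binomial_symmetric[of n "Suc (2*n)"] by (simp del: binomial_Suc_Suc)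
  also have "Suc (Suc (2*n)) * \<dots> = 2 * (Suc n * (Suc (2*n) choose Suc n))"
    by (simp del: binomial_Suc_Suc)
  also have "Suc n * (Suc (2*n) choose Suc n) = Suc (2*n) * ((2*n) choose n)"
    by (rule Suc_times_binomial)
  finally show ?thesis
    by (simp del: binomial_Suc_Suc)
qed

lemma telescoping_decrements:
  fixes u t :: "nat \<Rightarrow> 'a::ab_group_add"
  assumes "\<And>n. u (Suc n) = u n - t (Suc n)"
  shows "u n = u 0 - (\<Sum>k=1..n. t k)"
  by (induction n) (simp_all add: assms)

definition even_normalized :: "nat \<Rightarrow> real" where
  "even_normalized n = 2 ^ (2*n+2) * x_cos_moment (2*n) / real ((2*n) choose n)"

definition odd_normalized :: "nat \<Rightarrow> real" where
  "odd_normalized n = real (2*n+1) * real ((2*n) choose n) * x_cos_moment (2*n+1) / 2 ^ (2*n)"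

lemma even_normalized_Suc:
  "even_normalized (Suc n)
     = even_normalized n - 2 ^ (2 * Suc n) / (real (Suc n) ^ 2 * real ((2 * Suc n) choose Suc n))"
proof -
  define J J' where "J = x_cos_moment (2*n)" and "J' = x_cos_moment (2*n+2)"
  define a b P where "a = real n + 1" and "b = 2 * real n + 1" and "P = (2::real) ^ (2*n+2)"
  define C C' where "C = real ((2*n) choose n)" and "C' = real (2 * Suc n choose Suc n)"
  have a_pos: "a > 0" and b_pos: "b > 0" and C_pos: "C > 0" and C'_pos: "C' > 0"
    by (simp_all add: a_def b_def C_def C'_def del: binomial_Suc_Suc)
  have binom: "a * C' = 2 * b * C"
    using arg_cong[OF central_binomial_Suc[of n], of real] unfolding a_def b_def C_def C'_def
    by (simp add: algebra_simps del: binomial_Suc_Suc)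
  have rec: "2 * a * J' = b * J - 1 / (2 * a)"
    using x_cos_moment_recurrence[of "2*n"] unfolding a_def b_def J_def J'_def
    by (simp add: algebra_simps)
  have "even_normalized (Suc n) = 4 * P * J' / C'"
    unfolding even_normalized_def J'_def P_def C'_def
    by (simp add: power_add del: binomial_Suc_Suc)
  also have "\<dots> = (2 * a * J') * (2 * P / (a * C'))"
    using a_pos by (simp add: field_simps)
  also have "\<dots> = 2 * P * b * J / (a * C') - P / (a\<^sup>2 * C')"
    unfolding rec using a_pos C'_pos by (simp add: field_simps power2_eq_square)
  also have "\<dots> = P * J / C - P / (a\<^sup>2 * C')"
    unfolding binom using b_pos C_pos by simp
  also have "\<dots> = even_normalized n - 2 ^ (2 * Suc n) / (real (Suc n) ^ 2 * C')"
    unfolding even_normalized_def J_def P_def C_def a_def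
    by (simp add: power_add)
  finally show ?thesis
    unfolding C'_def .
qed

lemma odd_normalized_Suc:
  "odd_normalized (Suc n)
     = odd_normalized n - real (2 * Suc n choose Suc n) / (2 ^ (2 * Suc n) * real (2 * Suc n + 1))"
proof -
  define J J' where "J = x_cos_moment (2*n+1)" and "J' = x_cos_moment (2*n+1+2)"
  define a b d Q where "a = real n + 1" and "b = 2 * real n + 1" and "d = 2 * real n + 3"
    and "Q = (2::real) ^ (2*n)"
  define C C' where "C = real ((2*n) choose n)" and "C' = real (2 * Suc n choose Suc n)"
  have d_pos: "d > 0" and Q_pos: "Q > 0"
    by (simp_all add: d_def Q_def)
  have binom: "a * C' = 2 * b * C"
    using arg_cong[OF central_binomial_Suc[of n], of real] unfolding a_def b_def C_def C'_def
    by (simp add: algebra_simps del: binomial_Suc_Suc)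
  have rec: "d * J' = 2 * a * J - 1 / d"
    using x_cos_moment_recurrence[of "2*n+1"] unfolding a_def d_def J_def J'_def
    by (simp add: algebra_simps)
  have "odd_normalized (Suc n) = C' / (4 * Q) * (d * J')"
    unfolding odd_normalized_def J'_def Q_def C'_def d_def
    by (simp add: power_add field_simps del: binomial_Suc_Suc)
  also have "\<dots> = 2 * (a * C') * J / (4 * Q) - C' / (4 * Q * d)"
    unfolding rec using d_pos Q_pos by (simp add: field_simps)
  also have "\<dots> = b * C * J / Q - C' / (4 * Q * d)"
    unfolding binom using Q_pos by simp
  also have "\<dots> = odd_normalized n - C' / (2 ^ (2 * Suc n) * real (2 * Suc n + 1))"
    unfolding odd_normalized_def J_def Q_def C_def b_def d_def
    by (simp add: power_add algebra_simps)
  finally show ?thesis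
    unfolding C'_def .
qed

(* Closed forms of the normalised moments, by telescoping from E 0 = pi^2/2 and
   O 0 = pi/2 - 1 (the k = 0 summand of the odd sum is 1). *)
lemma even_normalized_closed_form:
  "even_normalized n = pi\<^sup>2 / 2 - (\<Sum>k=1..n. 2 ^ (2*k) / (real k ^ 2 * real ((2*k) choose k)))"
proof -
  have "even_normalized 0 = pi\<^sup>2 / 2"
    by (simp add: even_normalized_def x_cos_moment_0)
  moreover have "even_normalized n = even_normalized 0
      - (\<Sum>k=1..n. 2 ^ (2*k) / (real k ^ 2 * real ((2*k) choose k)))"
    by (rule telescoping_decrements) (rule even_normalized_Suc)
  ultimately show ?thesis
    by simp
qed

lemma odd_normalized_closed_form:
  "odd_normalized n = pi / 2 - (\<Sum>k=0..n. real ((2*k) choose k) / (2 ^ (2*k) * real (2*k+1)))"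
proof -
  have "odd_normalized 0 = pi / 2 - 1"
    using x_cos_moment_1 by (simp add: odd_normalized_def)
  moreover have "odd_normalized n = odd_normalized 0
      - (\<Sum>k=1..n. real ((2*k) choose k) / (2 ^ (2*k) * real (2*k+1)))"
    by (rule telescoping_decrements) (rule odd_normalized_Suc)
  ultimately show ?thesis
    by (simp add: sum.atLeast_Suc_atMost[of 0 n])
qed

theorem theorem2p6:
  fixes n :: nat
  shows "(integral {0..pi/2} (\<lambda>x::real. x * cos x ^ (2*n))
           = real ((2*n) choose n) / 2 ^ (2*n+2)
             * (pi^2 / 2 - (\<Sum>k=1..n. 2 ^ (2*k) / (real k ^ 2 * real ((2*k) choose k))))) \<and>
         (integral {0..pi/2} (\<lambda>x::real. x * cos x ^ (2*n+1))
           = 2 ^ (2*n) / (real (2*n+1) * real ((2*n) choose n))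
             * (pi / 2 - (\<Sum>k=0..n. real ((2*k) choose k) / (2 ^ (2*k) * real (2*k+1)))))"
proof -
  have C_pos: "real ((2*n) choose n) > 0"
    by simp
  have "x_cos_moment (2*n) = real ((2*n) choose n) / 2 ^ (2*n+2) * even_normalized n"
    using C_pos by (simp add: even_normalized_def)
  moreover have "x_cos_moment (2*n+1)
      = 2 ^ (2*n) / (real (2*n+1) * real ((2*n) choose n)) * odd_normalized n"
    using C_pos by (simp add: odd_normalized_def)
  ultimately show ?thesis
    unfolding even_normalized_closed_form odd_normalized_closed_form x_cos_moment_def
    by blast
qed

end
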